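(* Let $m>2\times 10^{31}$ be a positive integer. Then $W(m)<m^{2/9}$.
   Context: For a positive integer $m$, $\omega(m)$ is the number of distinct prime divisors of $m$ and $W(m)=2^{\omega(m)}$. *)

theory Defs
  imports "HOL-Computational_Algebra.Primes" Complex_Main
begin

definition omega :: "nat \<Rightarrow> nat" where
  "omega m = card (prime_factors m)"

definition W :: "nat \<Rightarrow> nat" where
  "W m = 2 ^ omega m"

end

theory Submission
  imports Defs
begin

text \<open>
  Since W(m)^9 = 512^\<omega>(m), it suffices to show 512^\<omega>(m) < m^2. If \<omega>(m) \<le> 23 this
  follows from 512^23 < (2 * 10^31)^2. Otherwise m^2 is at least the product of p^2 over
  the prime divisors p of m. Exchanging prime divisors above 89 for missing primes up to 89
  only lowers that product, so it is at least the product of p^2 over the 24 primes up to 89,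
  which exceeds 512^24, times 90^2 > 512 for each further prime divisor.
\<close>

lemma prod_small_primes_mult_pow_le_prod_primes:
  fixes f :: "nat \<Rightarrow> nat"
  assumes "mono f" and "finite P" and "\<And>p. p \<in> P \<Longrightarrow> prime p"
    and card_le: "card {p. prime p \<and> p \<le> N} \<le> card P"
  shows "(\<Prod>p | prime p \<and> p \<le> N. f p) * f (Suc N) ^ (card P - card {p. prime p \<and> p \<le> N})
           \<le> prod f P"
proof -
  define A where "A = {p. prime p \<and> p \<le> N}"
  have "finite A" by (simp add: A_def)
  define C D E where "C = P \<inter> A" and "D = P - A" and "E = A - P"
  have card_P: "card P = card C + card D"
    unfolding C_def D_def using \<open>finite P\<close> by (metis card_Int_Diff)
  have card_A: "card A = card C + card E"
    unfolding C_def E_def using \<open>finite A\<close> by (metis card_Int_Diff inf_commute)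
  have "card E \<le> card D" "card P - card A = card D - card E"
    using card_P card_A card_le by (simp_all add: A_def)
  have "prod f E \<le> f (Suc N) ^ card E"
  proof -
    have "prod f E \<le> (\<Prod>p\<in>E. f (Suc N))"
      by (intro prod_mono) (auto simp: E_def A_def intro: monoD[OF \<open>mono f\<close>])
    then show ?thesis by simp
  qed
  moreover have "f (Suc N) ^ card D \<le> prod f D"
  proof -
    have "(\<Prod>p\<in>D. f (Suc N)) \<le> prod f D"
      by (intro prod_mono) (auto simp: D_def A_def \<open>\<And>p. p \<in> P \<Longrightarrow> prime p\<close>
          intro: monoD[OF \<open>mono f\<close>])
    then show ?thesis by simp
  qed
  ultimately have "prod f E * f (Suc N) ^ (card D - card E) \<le> prod f D"
    using \<open>card E \<le> card D\<close>
    by (metis le_add_diff_inverse mult_le_mono1 order_trans power_add)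
  then have "prod f C * prod f E * f (Suc N) ^ (card D - card E) \<le> prod f C * prod f D"
    by (simp add: mult.assoc)
  moreover have "prod f A = prod f C * prod f E"
    unfolding C_def E_def using \<open>finite A\<close> by (metis inf_commute prod.Int_Diff)
  moreover have "prod f P = prod f C * prod f D"
    unfolding C_def D_def using \<open>finite P\<close> by (metis prod.Int_Diff)
  ultimately show ?thesis
    using \<open>card P - card A = card D - card E\<close> by (simp add: A_def)
qed

lemma primes_le_89:
  "{p::nat. prime p \<and> p \<le> 89} =
     {2,3,5,7,11,13,17,19,23,29,31,37,41,43,47,53,59,61,67,71,73,79,83,89}"
proof -
  have "{p::nat. prime p \<and> p \<le> 89} = Set.filter prime {..89}" by auto
  also have "\<dots> = {2,3,5,7,11,13,17,19,23,29,31,37,41,43,47,53,59,61,67,71,73,79,83,89}"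
    by code_simp
  finally show ?thesis .
qed

lemma pow_512_less_prod_prime_squares:
  fixes P :: "nat set"
  assumes "finite P" and "\<And>p. p \<in> P \<Longrightarrow> prime p" and "card P \<ge> 24"
  shows "512 ^ card P < (\<Prod>p\<in>P. p\<^sup>2)"
proof -
  have card_A: "card {p::nat. prime p \<and> p \<le> 89} = 24"
    by (simp add: primes_le_89)
  have "(512::nat) ^ card P = 512 ^ 24 * 512 ^ (card P - 24)"
    using \<open>card P \<ge> 24\<close> by (metis le_add_diff_inverse power_add)
  also have "\<dots> < (\<Prod>p | prime p \<and> p \<le> 89. p\<^sup>2) * 512 ^ (card P - 24)"
    by (simp add: primes_le_89)
  also have "\<dots> \<le> (\<Prod>p | prime p \<and> p \<le> 89. p\<^sup>2) * (Suc 89)\<^sup>2 ^ (card P - 24)"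
    by (intro mult_left_mono power_mono) auto
  also have "\<dots> \<le> (\<Prod>p\<in>P. p\<^sup>2)"
    using prod_small_primes_mult_pow_le_prod_primes[of "\<lambda>p. p\<^sup>2" P 89] assms card_A
    by (simp add: mono_def power_mono)
  finally show ?thesis .
qed

lemma prod_prime_factors_le:
  fixes m :: nat
  assumes "m > 0"
  shows "\<Prod>(prime_factors m) \<le> m"
proof -
  have "\<Prod>(prime_factors m) \<le> (\<Prod>p\<in>prime_factors m. p ^ multiplicity p m)"
  proof (rule prod_mono)
    fix p assume "p \<in> prime_factors m"
    then have "prime p" "multiplicity p m \<ge> 1"
      using assms by (auto simp: prime_factors_multiplicity)
    then show "0 \<le> p \<and> p \<le> p ^ multiplicity p m"
      using self_le_power[OF prime_ge_1_nat] by simp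
  qed
  also have "\<dots> = m"
    using assms by (rule prime_factorization_nat[symmetric])
  finally show ?thesis .
qed

lemma W_pow_9_less_square:
  fixes m :: nat
  assumes "m > 2 * 10 ^ 31"
  shows "W m ^ 9 < m\<^sup>2"
proof -
  have "W m ^ 9 = 512 ^ omega m"
    by (simp add: W_def power_mult[symmetric] mult.commute[of _ 9] power_mult)
  also have "\<dots> < m\<^sup>2"
  proof (cases "omega m \<le> 23")
    case True
    have "(512::nat) ^ omega m \<le> 512 ^ 23" using True by (intro power_increasing) auto
    also have "\<dots> < (2 * 10 ^ 31)\<^sup>2" by simp
    also have "\<dots> < m\<^sup>2" using assms by (intro power_strict_mono) auto
    finally show ?thesis .
  next
    case False
    have "512 ^ omega m < (\<Prod>p\<in>prime_factors m. p\<^sup>2)"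
      using False unfolding omega_def by (intro pow_512_less_prod_prime_squares) auto
    also have "\<dots> = (\<Prod>(prime_factors m))\<^sup>2" by (simp add: prod_power_distrib)
    also have "\<dots> \<le> m\<^sup>2" using assms by (intro power_mono prod_prime_factors_le) auto
    finally show ?thesis .
  qed
  finally show ?thesis .
qed

lemma less_powr_if_pow_less:
  fixes x y :: real
  assumes "x > 0" and "y \<ge> 0" and "n > 0" and "y ^ n < x ^ k"
  shows "y < x powr (k / n)"
proof -
  have "(x powr (k / n)) ^ n = x ^ k"
    using assms by (simp add: powr_power powr_realpow)
  then show ?thesis
    using assms by (metis power_less_imp_less_base powr_ge_zero)
qed

theorem lemma4p1:
  fixes m :: nat
  assumes "real m > 2 * 10 ^ 31"
  shows "real (W m) < real m powr (2 / 9)"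
proof -
  have "m > 2 * 10 ^ 31"
    using assms by (metis of_nat_less_iff of_nat_numeral of_nat_power of_nat_mult)
  then have "real (W m) ^ 9 < real m ^ 2"
    by (metis W_pow_9_less_square of_nat_less_iff of_nat_power)
  then show ?thesis
    using less_powr_if_pow_less[of "real m" "real (W m)" 9 2] \<open>m > 2 * 10 ^ 31\<close> by simp
qed

end
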